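(* There exists $C=C(\dim G)$ such that the following holds. Let $\eta>0$, let $B\subseteq B_1^U$ be a ball of Lebesgue measure at least $\eta$, let $\rho>0$, $t\in\mathbb R$ and $v\in Ge_1$. Then $$\bigl|\{\mathbf s\in B:\|a_tu_{\mathbf s}v\|\le e^t\eta^2\rho^2\|v\|\}\bigr|\le C\rho\,|B|.$$
   Context: Fix $n\ge3$. $G=\mathrm{SO}^\circ(n,1)$ (identity component of determinant-one matrices preserving $Q_0(x)=2x_1x_{n+1}-\sum_{k=2}^nx_k^2$) acting linearly on $\mathbb R^{n+1}$ with Euclidean norm; $e_1$ is the first standard basis vector. $a_t=\mathrm{diag}(e^t,1,\dots,1,e^{-t})$; $u_{\mathbf s}=n(\mathbf s,0)$ with $n(\mathbf s,r)=\begin{pmatrix}1&(\mathbf s,r)&\frac12\|(\mathbf s,r)\|^2\\0&I_{n-1}&(\mathbf s,r)^T\\0&0&1\end{pmatrix}$. $B_1^U=\{\mathbf s\in\mathbb R^{n-2}:\|\mathbf s\|\le1\}$ with Lebesgue measure $|\cdot|$ normalized so $|B_1^U|=1$. *)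

theory Defs
  imports "HOL-Analysis.Analysis" "HOL-Combinatorics.Permutations"
begin

text \<open>Vectors in R^(n+1) are functions nat => real; the coordinates
  x_1,...,x_(n+1) of the paper are the values at indices 0,...,n.
  (n+1)x(n+1) matrices are functions nat => nat => real whose entries
  vanish outside {0..n} x {0..n}; they carry the product topology
  (entrywise convergence).  Vectors s in R^(n-2) are elements of
  PiE {..<n-2} (\<lambda>_. UNIV) (coordinates s_1..s_(n-2) at indices 0..n-3),
  with Lebesgue measure the product measure of lborel.\<close>

definition mat_supp :: "nat \<Rightarrow> (nat \<Rightarrow> nat \<Rightarrow> real) \<Rightarrow> bool" where
  "mat_supp n g \<longleftrightarrow> (\<forall>i j. g i j \<noteq> 0 \<longrightarrow> i \<le> n \<and> j \<le> n)"

definition idm :: "nat \<Rightarrow> nat \<Rightarrow> nat \<Rightarrow> real" where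
  "idm n = (\<lambda>i j. if i = j \<and> i \<le> n then 1 else 0)"

definition detm :: "nat \<Rightarrow> (nat \<Rightarrow> nat \<Rightarrow> real) \<Rightarrow> real" where
  "detm m A = (\<Sum>p | p permutes {..<m}. of_int (sign p) * (\<Prod>i<m. A i (p i)))"

definition mv :: "nat \<Rightarrow> (nat \<Rightarrow> nat \<Rightarrow> real) \<Rightarrow> (nat \<Rightarrow> real) \<Rightarrow> (nat \<Rightarrow> real)" where
  "mv n g x = (\<lambda>i. if i \<le> n then (\<Sum>j\<le>n. g i j * x j) else 0)"

definition vnorm :: "nat \<Rightarrow> (nat \<Rightarrow> real) \<Rightarrow> real" where
  "vnorm n x = sqrt (\<Sum>i\<le>n. (x i)\<^sup>2)"

definition Q0 :: "nat \<Rightarrow> (nat \<Rightarrow> real) \<Rightarrow> real" where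
  "Q0 n x = 2 * x 0 * x n - (\<Sum>k\<in>{1..n-1}. (x k)\<^sup>2)"

definition SOQ :: "nat \<Rightarrow> (nat \<Rightarrow> nat \<Rightarrow> real) set" where
  "SOQ n = {g. mat_supp n g \<and> detm (n+1) g = 1 \<and> (\<forall>x. Q0 n (mv n g x) = Q0 n x)}"

definition Gn :: "nat \<Rightarrow> (nat \<Rightarrow> nat \<Rightarrow> real) set" where
  "Gn n = connected_component_set (SOQ n) (idm n)"

definition e1 :: "nat \<Rightarrow> real" where
  "e1 = (\<lambda>i. if i = 0 then 1 else 0)"

definition orbit_e1 :: "nat \<Rightarrow> (nat \<Rightarrow> real) set" where
  "orbit_e1 n = (\<lambda>g. mv n g e1) ` Gn n"

definition a_t :: "nat \<Rightarrow> real \<Rightarrow> nat \<Rightarrow> nat \<Rightarrow> real" where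
  "a_t n t = (\<lambda>i j. if i = j \<and> i \<le> n then
                     (if i = 0 then exp t else if i = n then exp (- t) else 1) else 0)"

text \<open>n(w) for w in R^(n-1), w given by its entries w_1..w_(n-1) at indices 1..n-1.\<close>
definition n_mat :: "nat \<Rightarrow> (nat \<Rightarrow> real) \<Rightarrow> nat \<Rightarrow> nat \<Rightarrow> real" where
  "n_mat n w = (\<lambda>i j.
     if i = 0 \<and> j = 0 then 1
     else if i = 0 \<and> 1 \<le> j \<and> j \<le> n - 1 then w j
     else if i = 0 \<and> j = n then (\<Sum>k\<in>{1..n-1}. (w k)\<^sup>2) / 2
     else if 1 \<le> i \<and> i \<le> n - 1 \<and> j = i then 1
     else if 1 \<le> i \<and> i \<le> n - 1 \<and> j = n then w i
     else if i = n \<and> j = n then 1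
     else 0)"

definition u_s :: "nat \<Rightarrow> (nat \<Rightarrow> real) \<Rightarrow> nat \<Rightarrow> nat \<Rightarrow> real" where
  "u_s n s = n_mat n (\<lambda>j. if 1 \<le> j \<and> j \<le> n - 2 then s (j - 1) else 0)"

definition mm :: "nat \<Rightarrow> (nat \<Rightarrow> nat \<Rightarrow> real) \<Rightarrow> (nat \<Rightarrow> nat \<Rightarrow> real) \<Rightarrow> nat \<Rightarrow> nat \<Rightarrow> real" where
  "mm n A B = (\<lambda>i j. if i \<le> n \<and> j \<le> n then (\<Sum>k\<le>n. A i k * B k j) else 0)"

definition lebU :: "nat \<Rightarrow> (nat \<Rightarrow> real) measure" where
  "lebU n = PiM {..<n-2} (\<lambda>_. lborel)"

definition ballU :: "nat \<Rightarrow> (nat \<Rightarrow> real) \<Rightarrow> real \<Rightarrow> (nat \<Rightarrow> real) set" where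
  "ballU n c r = {s \<in> PiE {..<n-2} (\<lambda>_. UNIV). sqrt (\<Sum>i<n-2. (s i - c i)\<^sup>2) \<le> r}"

definition B1U :: "nat \<Rightarrow> (nat \<Rightarrow> real) set" where
  "B1U n = ballU n (\<lambda>_. 0) 1"

definition volU :: "nat \<Rightarrow> (nat \<Rightarrow> real) set \<Rightarrow> real" where
  "volU n A = measure (lebU n) A / measure (lebU n) (B1U n)"

end

theory Submission
  imports Defs
begin

(*
  A vector v in the orbit of e_1 is nonzero and null, Q_0(v) = 0. Only the first coordinate
  of a_t u_s v is needed: it is e^t P(s) with P(s) = v_1 + s.x + |s|^2 v_(n+1) / 2,
  x = (v_2, ..., v_(n-1)), so with eps = eta rho the set in question lies in
  {s. |P(s)| <= eps^2 |v|}. Since 2 v_1 v_(n+1) = |x|^2 + v_n^2, completing the square gives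
  2 v_(n+1) P(s) = |v_(n+1) s + x|^2 + v_n^2.
  If |v_(n+1)| < |v|/50, then v_1 carries almost all of |v| and |P(s)| > |v|/4 on the unit
  ball, so the set is empty as soon as eps < 1/2. Otherwise each s_i lies within 10 eps of
  -x_i / v_(n+1): a cube of volume (20 eps)^(n-2) <= 20^(n-2) eta rho <= 20^(n-2) rho |B|.
  For eta rho >= 1/2 the bound is trivial, because eta <= |B| <= 1.
*)

lemma measure_le_of_subset_fmeasurable:
  assumes "S \<subseteq> T" "T \<in> fmeasurable M"
  shows "measure M S \<le> measure M T"
  using assms measure_mono_fmeasurable[of S T M] measure_notin_sets[of S M]
  by (cases "S \<in> sets M") auto

lemma vnorm_eq_L2_set: "vnorm n x = L2_set x {..n}"
  unfolding vnorm_def L2_set_def ..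

lemma ballU_eq:
  "ballU n c r = {s \<in> PiE {..<n-2} (\<lambda>_. UNIV). L2_set (\<lambda>i. s i - c i) {..<n-2} \<le> r}"
  unfolding ballU_def L2_set_def ..

lemma emeasure_lebU_cube:
  assumes "r \<ge> 0"
  shows "emeasure (lebU n) (PiE {..<n-2} (\<lambda>i. {a i - r .. a i + r})) = ennreal ((2 * r) ^ (n - 2))"
proof -
  interpret product_sigma_finite "\<lambda>_::nat. lborel :: real measure" by standard
  have "emeasure (lebU n) (PiE {..<n-2} (\<lambda>i. {a i - r .. a i + r}))
      = (\<Prod>i<n-2. emeasure lborel {a i - r .. a i + r})"
    unfolding lebU_def by (rule emeasure_PiM) auto
  also have "\<dots> = (\<Prod>i<n-2. ennreal (2 * r))"
    using assms by (intro prod.cong) auto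
  finally show ?thesis
    using assms by (simp add: ennreal_power)
qed

lemma measure_lebU_cube:
  assumes "r \<ge> 0"
  shows "measure (lebU n) (PiE {..<n-2} (\<lambda>i. {a i - r .. a i + r})) = (2 * r) ^ (n - 2)"
  using emeasure_lebU_cube[OF assms] assms by (simp add: measure_def)

lemma fmeasurable_lebU_cube:
  assumes "r \<ge> 0"
  shows "PiE {..<n-2} (\<lambda>i. {a i - r .. a i + r}) \<in> fmeasurable (lebU n)"
proof (rule fmeasurableI)
  show "PiE {..<n-2} (\<lambda>i. {a i - r .. a i + r}) \<in> sets (lebU n)"
    unfolding lebU_def by (rule sets_PiM_I_finite) auto
qed (simp add: emeasure_lebU_cube[OF assms])

lemma ballU_in_sets: "ballU n c r \<in> sets (lebU n)"
proof -
  have "ballU n c r = {s \<in> space (lebU n). sqrt (\<Sum>i<n-2. (s i - c i)\<^sup>2) \<le> r}"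
    unfolding ballU_def lebU_def by (simp add: space_PiM)
  also have "\<dots> \<in> sets (lebU n)"
    unfolding lebU_def by measurable
  finally show ?thesis .
qed

lemma ballU_subset_cube: "ballU n c r \<subseteq> PiE {..<n-2} (\<lambda>i. {c i - r .. c i + r})"
proof
  fix s assume s: "s \<in> ballU n c r"
  have "s i \<in> {c i - r .. c i + r}" if "i < n - 2" for i
    using member_le_L2_set[of "{..<n-2}" i "\<lambda>i. \<bar>s i - c i\<bar>"] s that
    by (simp add: ballU_eq L2_set_def abs_le_iff)
  with s show "s \<in> PiE {..<n-2} (\<lambda>i. {c i - r .. c i + r})"
    by (auto simp: ballU_def PiE_iff abs_le_iff)
qed

lemma fmeasurable_ballU: "ballU n c r \<in> fmeasurable (lebU n)"
proof (cases "r \<ge> 0")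
  case True
  then show ?thesis
    using fmeasurableI2[OF fmeasurable_lebU_cube ballU_subset_cube ballU_in_sets] by blast
next
  case False
  then have "ballU n c r = {}"
    by (auto simp: ballU_eq dest: order.trans[OF L2_set_nonneg])
  then show ?thesis by simp
qed

lemma volU_mono_ballU:
  assumes "A \<subseteq> ballU n c r"
  shows "volU n A \<le> volU n (ballU n c r)"
  unfolding volU_def
  by (intro divide_right_mono measure_le_of_subset_fmeasurable[OF assms fmeasurable_ballU]) simp

lemma volU_le_1:
  assumes "A \<subseteq> B1U n"
  shows "volU n A \<le> 1"
proof -
  have "volU n A \<le> volU n (B1U n)"
    using volU_mono_ballU assms unfolding B1U_def by blast
  also have "\<dots> \<le> 1"
    unfolding volU_def by (cases "measure (lebU n) (B1U n) = 0") auto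
  finally show ?thesis .
qed

lemma Gn_subset_SOQ: "Gn n \<subseteq> SOQ n"
  unfolding Gn_def by (rule connected_component_subset)

lemma mv_e1:
  assumes "i \<le> n"
  shows "mv n g e1 i = g i 0"
proof -
  have "mv n g e1 i = (\<Sum>j\<le>n. g i j * e1 j)"
    using assms by (simp add: mv_def)
  also have "\<dots> = (\<Sum>j\<in>{0}. g i j * e1 j)"
    by (rule sum.mono_neutral_right) (auto simp: e1_def)
  finally show ?thesis
    by (simp add: e1_def)
qed

lemma Q0_orbit_e1:
  assumes "v \<in> orbit_e1 n" "n \<ge> 1"
  shows "Q0 n v = 0"
proof -
  obtain g where g: "g \<in> Gn n" and v: "v = mv n g e1"
    using assms(1) unfolding orbit_e1_def by auto
  have "Q0 n v = Q0 n e1"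
    using g Gn_subset_SOQ unfolding v SOQ_def by auto
  also have "\<dots> = 0"
    using assms(2) unfolding Q0_def e1_def by simp
  finally show ?thesis .
qed

lemma detm_eq_0_if_zero_column:
  assumes "j < m" "\<And>i. i < m \<Longrightarrow> A i j = 0"
  shows "detm m A = 0"
  unfolding detm_def
proof (intro sum.neutral ballI)
  fix p assume "p \<in> {p. p permutes {..<m}}"
  then have "j \<in> p ` {..<m}"
    using permutes_image assms(1) by fastforce
  then obtain i where "i < m" "p i = j"
    by auto
  then have "(\<Prod>i<m. A i (p i)) = 0"
    using assms(2) by (intro prod_zero) (auto intro!: bexI[of _ i])
  then show "of_int (sign p) * (\<Prod>i<m. A i (p i)) = 0"
    by simp
qed

lemma orbit_e1_nonzero:
  assumes "v \<in> orbit_e1 n"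
  obtains i where "i \<le> n" "v i \<noteq> 0"
proof -
  obtain g where g: "g \<in> Gn n" and v: "v = mv n g e1"
    using assms unfolding orbit_e1_def by auto
  have "detm (n + 1) g = 1"
    using g Gn_subset_SOQ unfolding SOQ_def by auto
  then obtain i where "i \<le> n" "g i 0 \<noteq> 0"
    using detm_eq_0_if_zero_column[of 0 "n + 1" g] by fastforce
  then show thesis
    using that[of i] by (simp add: v mv_e1)
qed

lemma vnorm_pos:
  assumes "i \<le> n" "x i \<noteq> 0"
  shows "vnorm n x > 0"
proof -
  have "L2_set x {..n} \<noteq> 0"
    using assms by (subst L2_set_eq_0_iff) auto
  then show ?thesis
    using L2_set_nonneg[of x "{..n}"] by (simp add: vnorm_eq_L2_set less_le)
qed

lemma abs_le_vnorm: "i \<le> n \<Longrightarrow> \<bar>x i\<bar> \<le> vnorm n x"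
  using member_le_L2_set[of "{..n}" i "\<lambda>i. \<bar>x i\<bar>"] by (simp add: vnorm_def L2_set_def)

lemma sum_atMost_Suc_Suc:
  "(\<Sum>i\<le>Suc (Suc d). f i) = f 0 + (\<Sum>i<d. f (Suc i)) + f (Suc d) + f (Suc (Suc d))"
  by (simp only: sum.atMost_shift sum.lessThan_Suc add.assoc)

lemma sum_atLeast1_atMost_Suc:
  "(\<Sum>k\<in>{1..Suc d}. f k) = (\<Sum>i<d. f (Suc i)) + f (Suc d)"
  by (simp only: One_nat_def sum.atLeast1_atMost_eq sum.lessThan_Suc)

lemma Q0_Suc_Suc:
  assumes "n = Suc (Suc d)"
  shows "Q0 n v = 2 * v 0 * v n - ((\<Sum>i<d. (v (Suc i))\<^sup>2) + (v (Suc d))\<^sup>2)"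
  using sum_atLeast1_atMost_Suc[of "\<lambda>k. (v k)\<^sup>2" d] unfolding Q0_def assms by simp

lemma vnorm_Suc_Suc_sq:
  assumes "n = Suc (Suc d)"
  shows "(vnorm n v)\<^sup>2 = (v 0)\<^sup>2 + ((\<Sum>i<d. (v (Suc i))\<^sup>2) + (v (Suc d))\<^sup>2) + (v n)\<^sup>2"
  using sum_atMost_Suc_Suc[of "\<lambda>k. (v k)\<^sup>2" d] unfolding vnorm_def assms
  by (simp add: sum_nonneg add.assoc)

lemma u_s_first_row:
  "u_s (Suc (Suc d)) s 0 j = (if j = 0 then 1 else if j \<le> d then s (j - 1)
     else if j = Suc (Suc d) then (\<Sum>i<d. (s i)\<^sup>2) / 2 else 0)"
  using sum_atLeast1_atMost_Suc[of "\<lambda>k. (if 1 \<le> k \<and> k \<le> d then s (k - 1) else 0)\<^sup>2" d]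
  unfolding u_s_def n_mat_def by auto

lemma first_coord_a_t_u_s:
  assumes n: "n = Suc (Suc d)"
  shows "mv n (mm n (a_t n t) (u_s n s)) v 0
       = exp t * (v 0 + (\<Sum>i<d. s i * v (Suc i)) + (\<Sum>i<d. (s i)\<^sup>2) / 2 * v n)"
proof -
  have row: "mm n (a_t n t) (u_s n s) 0 j = exp t * u_s n s 0 j" if "j \<le> n" for j
  proof -
    have "(\<Sum>k\<le>n. a_t n t 0 k * u_s n s k j) = (\<Sum>k\<in>{0}. a_t n t 0 k * u_s n s k j)"
      by (rule sum.mono_neutral_right) (auto simp: a_t_def)
    with that show ?thesis
      by (simp add: mm_def a_t_def)
  qed
  have "(\<Sum>j\<le>n. u_s n s 0 j * v j)
      = v 0 + (\<Sum>i<d. s i * v (Suc i)) + (\<Sum>i<d. (s i)\<^sup>2) / 2 * v n"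
    unfolding n sum_atMost_Suc_Suc by (simp add: u_s_first_row)
  then show ?thesis
    by (simp add: mv_def row mult.assoc flip: sum_distrib_left)
qed

lemma abs_first_coord_gt_if_last_small:
  fixes s x :: "nat \<Rightarrow> real"
  assumes W: "W \<ge> 0"
    and norm: "N\<^sup>2 = v0\<^sup>2 + ((\<Sum>i<d. (x i)\<^sup>2) + W) + vn\<^sup>2"
    and null: "2 * v0 * vn = (\<Sum>i<d. (x i)\<^sup>2) + W"
    and small: "\<bar>vn\<bar> < N / 50"
    and s: "(\<Sum>i<d. (s i)\<^sup>2) \<le> 1"
  shows "N / 4 < \<bar>v0 + (\<Sum>i<d. s i * x i) + (\<Sum>i<d. (s i)\<^sup>2) / 2 * vn\<bar>"
proof -
  have N: "N > 0"
    using small by linarith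
  have X: "0 \<le> (\<Sum>i<d. (x i)\<^sup>2)"
    by (simp add: sum_nonneg)
  have "\<bar>v0\<bar>\<^sup>2 \<le> N\<^sup>2"
    unfolding power2_abs using norm X W zero_le_power2[of vn] by linarith
  then have v0_le: "\<bar>v0\<bar> \<le> N"
    by (rule power2_le_imp_le) (use N in simp)
  have "(\<Sum>i<d. (x i)\<^sup>2) + W \<le> 2 * \<bar>v0\<bar> * \<bar>vn\<bar>"
    unfolding null[symmetric] using abs_ge_self[of "2 * v0 * vn"] by (simp add: abs_mult)
  also have "\<dots> \<le> 2 * N * (N / 50)"
    using v0_le small by (intro mult_mono) auto
  also have "\<dots> = N\<^sup>2 / 25"
    by (simp add: power2_eq_square)
  finally have X_le: "(\<Sum>i<d. (x i)\<^sup>2) + W \<le> N\<^sup>2 / 25" .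
  have "\<bar>vn\<bar>\<^sup>2 \<le> (N / 50)\<^sup>2"
    using small by (intro power_mono) auto
  moreover have "(N / 50)\<^sup>2 = N\<^sup>2 / 2500" "(97 / 100 * N)\<^sup>2 = 9409 / 10000 * N\<^sup>2"
    by (simp_all add: power2_eq_square)
  ultimately have "(97 / 100 * N)\<^sup>2 \<le> \<bar>v0\<bar>\<^sup>2"
    unfolding power2_abs using norm X_le zero_le_power2[of N] by linarith
  then have v0_ge: "97 / 100 * N \<le> \<bar>v0\<bar>"
    by (rule power2_le_imp_le) simp
  have L2_s: "L2_set s {..<d} \<le> 1"
    using s by (simp add: L2_set_def)
  have "L2_set x {..<d} \<le> sqrt ((N / 5)\<^sup>2)"
    unfolding L2_set_def using X_le W by (intro real_sqrt_le_mono) (simp add: power_divide)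
  then have L2_x: "L2_set x {..<d} \<le> N / 5"
    using N by simp
  have "\<bar>\<Sum>i<d. s i * x i\<bar> \<le> (\<Sum>i<d. \<bar>s i\<bar> * \<bar>x i\<bar>)"
    using sum_abs[of "\<lambda>i. s i * x i" "{..<d}"] by (simp add: abs_mult)
  also have "\<dots> \<le> L2_set s {..<d} * L2_set x {..<d}"
    by (rule L2_set_mult_ineq)
  also have "\<dots> \<le> 1 * (N / 5)"
    using L2_s L2_x by (intro mult_mono) auto
  finally have cross: "\<bar>\<Sum>i<d. s i * x i\<bar> \<le> N / 5"
    by simp
  have "\<bar>(\<Sum>i<d. (s i)\<^sup>2) / 2 * vn\<bar> = (\<Sum>i<d. (s i)\<^sup>2) / 2 * \<bar>vn\<bar>"
    by (simp add: abs_mult sum_nonneg)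
  also have "\<dots> \<le> 1 / 2 * (N / 50)"
    using s small by (intro mult_mono) auto
  finally have quad: "\<bar>(\<Sum>i<d. (s i)\<^sup>2) / 2 * vn\<bar> \<le> N / 100"
    by simp
  have "\<bar>v0\<bar> \<le> \<bar>v0 + (\<Sum>i<d. s i * x i) + (\<Sum>i<d. (s i)\<^sup>2) / 2 * vn\<bar>
                + \<bar>\<Sum>i<d. s i * x i\<bar> + \<bar>(\<Sum>i<d. (s i)\<^sup>2) / 2 * vn\<bar>"
    by linarith
  with v0_ge cross quad N show ?thesis
    by linarith
qed

lemma completed_square_first_coord:
  fixes s x :: "nat \<Rightarrow> real"
  assumes "2 * v0 * vn = (\<Sum>i<d. (x i)\<^sup>2) + W"
  shows "2 * vn * (v0 + (\<Sum>i<d. s i * x i) + (\<Sum>i<d. (s i)\<^sup>2) / 2 * vn)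
       = (\<Sum>i<d. (vn * s i + x i)\<^sup>2) + W"
proof -
  have "(\<Sum>i<d. (vn * s i + x i)\<^sup>2)
      = vn\<^sup>2 * (\<Sum>i<d. (s i)\<^sup>2) + 2 * vn * (\<Sum>i<d. s i * x i) + (\<Sum>i<d. (x i)\<^sup>2)"
    by (simp add: power2_sum power_mult_distrib sum.distrib sum_distrib_left mult_ac)
  with assms show ?thesis
    by (simp add: algebra_simps power2_eq_square)
qed

lemma coord_near_center_if_completed_square:
  fixes s x :: "nat \<Rightarrow> real"
  assumes square: "2 * vn * P = (\<Sum>i<d. (vn * s i + x i)\<^sup>2) + W"
    and W: "W \<ge> 0" and i: "i < d"
    and P: "\<bar>P\<bar> \<le> \<epsilon>\<^sup>2 * N" and large: "N \<le> 50 * \<bar>vn\<bar>" and vn: "vn \<noteq> 0"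
  shows "\<bar>s i + x i / vn\<bar> \<le> 10 * \<bar>\<epsilon>\<bar>"
proof -
  have "(vn * s i + x i)\<^sup>2 \<le> (\<Sum>i<d. (vn * s i + x i)\<^sup>2) + W"
    using member_le_sum[of i "{..<d}" "\<lambda>i. (vn * s i + x i)\<^sup>2"] i W by simp
  also have "\<dots> \<le> 2 * \<bar>vn\<bar> * \<bar>P\<bar>"
    unfolding square[symmetric] using abs_ge_self[of "2 * vn * P"] by (simp add: abs_mult)
  also have "\<dots> \<le> 2 * \<bar>vn\<bar> * (\<epsilon>\<^sup>2 * (50 * \<bar>vn\<bar>))"
    using P mult_left_mono[OF large zero_le_power2[of \<epsilon>]] by (intro mult_left_mono) auto
  also have "\<dots> = (vn * (10 * \<epsilon>))\<^sup>2"
    by (simp add: power2_eq_square)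
  finally have "\<bar>vn * s i + x i\<bar> \<le> \<bar>vn * (10 * \<epsilon>)\<bar>"
    by (simp only: abs_le_square_iff power2_abs)
  moreover have "vn * s i + x i = vn * (s i + x i / vn)"
    using vn by (simp add: field_simps)
  ultimately show ?thesis
    using vn by (simp add: abs_mult)
qed

definition contracted_set ::
    "nat \<Rightarrow> (nat \<Rightarrow> real) set \<Rightarrow> real \<Rightarrow> real \<Rightarrow> (nat \<Rightarrow> real) \<Rightarrow> (nat \<Rightarrow> real) set" where
  "contracted_set n B t c v =
     {s \<in> B. vnorm n (mv n (mm n (a_t n t) (u_s n s)) v) \<le> exp t * c * vnorm n v}"

lemma first_coord_le_on_contracted_set:
  assumes n: "n = Suc (Suc d)" and s: "s \<in> contracted_set n B t c v"
  shows "\<bar>v 0 + (\<Sum>i<d. s i * v (Suc i)) + (\<Sum>i<d. (s i)\<^sup>2) / 2 * v n\<bar> \<le> c * vnorm n v"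
proof -
  have "exp t * \<bar>v 0 + (\<Sum>i<d. s i * v (Suc i)) + (\<Sum>i<d. (s i)\<^sup>2) / 2 * v n\<bar>
      = \<bar>mv n (mm n (a_t n t) (u_s n s)) v 0\<bar>"
    by (simp add: first_coord_a_t_u_s[OF n] abs_mult)
  also have "\<dots> \<le> vnorm n (mv n (mm n (a_t n t) (u_s n s)) v)"
    by (rule abs_le_vnorm) simp
  also have "\<dots> \<le> exp t * (c * vnorm n v)"
    using s by (simp add: contracted_set_def mult.assoc)
  finally show ?thesis
    by simp
qed

lemma contracted_set_empty_if_last_small:
  assumes n: "n = Suc (Suc d)" and Q: "Q0 n v = 0" and B: "B \<subseteq> B1U n" and c: "c \<le> 1 / 4"
    and small: "\<bar>v n\<bar> < vnorm n v / 50"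
  shows "contracted_set n B t c v = {}"
proof -
  have "s \<notin> contracted_set n B t c v" for s
  proof
    assume s: "s \<in> contracted_set n B t c v"
    then have "s \<in> B1U n"
      using B by (auto simp: contracted_set_def)
    then have unit: "(\<Sum>i<d. (s i)\<^sup>2) \<le> 1"
      by (simp add: B1U_def ballU_def n)
    have null: "2 * v 0 * v n = (\<Sum>i<d. (v (Suc i))\<^sup>2) + (v (Suc d))\<^sup>2"
      using Q Q0_Suc_Suc[OF n, of v] by simp
    have "vnorm n v / 4 < \<bar>v 0 + (\<Sum>i<d. s i * v (Suc i)) + (\<Sum>i<d. (s i)\<^sup>2) / 2 * v n\<bar>"
      by (rule abs_first_coord_gt_if_last_small[OF _ vnorm_Suc_Suc_sq[OF n] null small unit]) simp
    also have "\<dots> \<le> c * vnorm n v"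
      by (rule first_coord_le_on_contracted_set[OF n s])
    also have "\<dots> \<le> 1 / 4 * vnorm n v"
      using c by (intro mult_right_mono) (simp_all add: vnorm_eq_L2_set)
    finally show False
      by simp
  qed
  then show ?thesis
    by blast
qed

lemma contracted_set_subset_cube:
  assumes n: "n = Suc (Suc d)" and Q: "Q0 n v = 0" and B: "B \<subseteq> space (lebU n)"
    and vn: "v n \<noteq> 0" and large: "vnorm n v \<le> 50 * \<bar>v n\<bar>" and \<epsilon>: "\<epsilon> \<ge> 0"
  shows "contracted_set n B t (\<epsilon>\<^sup>2) v
       \<subseteq> PiE {..<n-2} (\<lambda>i. {- v (Suc i) / v n - 10 * \<epsilon> .. - v (Suc i) / v n + 10 * \<epsilon>})"
proof
  fix s assume s: "s \<in> contracted_set n B t (\<epsilon>\<^sup>2) v"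
  have null: "2 * v 0 * v n = (\<Sum>i<d. (v (Suc i))\<^sup>2) + (v (Suc d))\<^sup>2"
    using Q Q0_Suc_Suc[OF n, of v] by simp
  have "\<forall>i<d. s i \<in> {- v (Suc i) / v n - 10 * \<epsilon> .. - v (Suc i) / v n + 10 * \<epsilon>}"
  proof (intro allI impI)
    fix i assume "i < d"
    from coord_near_center_if_completed_square[OF completed_square_first_coord[OF null]
        zero_le_power2 this first_coord_le_on_contracted_set[OF n s] large vn] \<epsilon>
    show "s i \<in> {- v (Suc i) / v n - 10 * \<epsilon> .. - v (Suc i) / v n + 10 * \<epsilon>}"
      by (simp add: abs_le_iff)
  qed
  moreover have "s \<in> PiE {..<n-2} (\<lambda>_. UNIV)"
    using s B by (auto simp: contracted_set_def lebU_def space_PiM)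
  ultimately show "s \<in> PiE {..<n-2} (\<lambda>i. {- v (Suc i) / v n - 10 * \<epsilon> .. - v (Suc i) / v n + 10 * \<epsilon>})"
    by (auto simp: PiE_iff abs_le_iff n)
qed

lemma measure_contracted_set_le:
  assumes n3: "n \<ge> 3" and v: "v \<in> orbit_e1 n" and B: "B \<subseteq> B1U n" and \<epsilon>: "0 \<le> \<epsilon>" "\<epsilon> < 1 / 2"
  shows "measure (lebU n) (contracted_set n B t (\<epsilon>\<^sup>2) v) \<le> (20 * \<epsilon>) ^ (n - 2)"
proof -
  define d where "d = n - 2"
  have n: "n = Suc (Suc d)"
    using n3 unfolding d_def by simp
  have Q: "Q0 n v = 0"
    using Q0_orbit_e1[OF v] n3 by simp
  consider (small) "\<bar>v n\<bar> < vnorm n v / 50" | (large) "vnorm n v \<le> 50 * \<bar>v n\<bar>"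
    by linarith
  then show ?thesis
  proof cases
    case small
    have "\<epsilon>\<^sup>2 \<le> (1 / 2)\<^sup>2"
      using \<epsilon> by (intro power_mono) auto
    then have "contracted_set n B t (\<epsilon>\<^sup>2) v = {}"
      using contracted_set_empty_if_last_small[OF n Q B _ small] by (simp add: power2_eq_square)
    then show ?thesis
      using \<epsilon> by simp
  next
    case large
    obtain i where "i \<le> n" "v i \<noteq> 0"
      using orbit_e1_nonzero[OF v] .
    then have "v n \<noteq> 0"
      using vnorm_pos large by fastforce
    moreover have "B \<subseteq> space (lebU n)"
      using B sets.sets_into_space[OF ballU_in_sets] unfolding B1U_def by blast
    ultimately have "measure (lebU n) (contracted_set n B t (\<epsilon>\<^sup>2) v)
        \<le> measure (lebU n) (PiE {..<n-2} (\<lambda>i. {- v (Suc i) / v n - 10 * \<epsilon> .. - v (Suc i) / v n + 10 * \<epsilon>}))"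
      using \<epsilon> by (intro measure_le_of_subset_fmeasurable contracted_set_subset_cube[OF n Q]
          fmeasurable_lebU_cube) (use large in auto)
    also have "\<dots> = (20 * \<epsilon>) ^ (n - 2)"
      using measure_lebU_cube[of "10 * \<epsilon>" n "\<lambda>i. - v (Suc i) / v n"] \<epsilon> by simp
    finally show ?thesis .
  qed
qed

lemma volU_contracted_set_le_eps:
  assumes "n \<ge> 3" "v \<in> orbit_e1 n" "B \<subseteq> B1U n" "0 \<le> \<epsilon>" "\<epsilon> < 1 / 2"
  shows "volU n (contracted_set n B t (\<epsilon>\<^sup>2) v) \<le> 20 ^ (n - 2) / measure (lebU n) (B1U n) * \<epsilon>"
proof -
  have "measure (lebU n) (contracted_set n B t (\<epsilon>\<^sup>2) v) \<le> (20 * \<epsilon>) ^ (n - 2)"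
    by (rule measure_contracted_set_le[OF assms])
  also have "\<dots> \<le> 20 ^ (n - 2) * \<epsilon>"
    unfolding power_mult_distrib using power_decreasing[of 1 "n - 2" \<epsilon>] assms
    by (intro mult_left_mono) auto
  finally show ?thesis
    unfolding volU_def using divide_right_mono by fastforce
qed

lemma volU_contracted_set_le:
  assumes n: "n \<ge> 3" and v: "v \<in> orbit_e1 n" and ball: "B = ballU n c r" and B: "B \<subseteq> B1U n"
    and \<eta>: "0 < \<eta>" "\<eta> \<le> volU n B" and \<rho>: "0 < \<rho>"
  shows "volU n (contracted_set n B t ((\<eta> * \<rho>)\<^sup>2) v)
       \<le> (2 + 20 ^ (n - 2) / measure (lebU n) (B1U n)) * \<rho> * volU n B"
    (is "volU n ?S \<le> (2 + ?K) * \<rho> * volU n B")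
proof -
  have K: "?K \<ge> 0"
    by simp
  show ?thesis
  proof (cases "\<eta> * \<rho> < 1 / 2")
    case True
    have "volU n ?S \<le> ?K * (\<eta> * \<rho>)"
      using n v B True \<eta> \<rho> by (intro volU_contracted_set_le_eps) auto
    also have "\<dots> \<le> ?K * (\<rho> * volU n B)"
      using K \<eta> \<rho> by (intro mult_left_mono) auto
    also have "\<dots> \<le> (2 + ?K) * \<rho> * volU n B"
      using \<eta> \<rho> by (simp add: algebra_simps)
    finally show ?thesis .
  next
    case False
    have "\<eta> * \<rho> \<le> 1 * \<rho>"
      using volU_le_1[OF B] \<eta> \<rho> by (intro mult_right_mono) auto
    moreover have "0 \<le> ?K * \<rho>"
      using K \<rho> by simp
    ultimately have "1 \<le> (2 + ?K) * \<rho>"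
      using False unfolding distrib_right by linarith
    then have "volU n B \<le> (2 + ?K) * \<rho> * volU n B"
      using mult_right_mono[of 1 "(2 + ?K) * \<rho>" "volU n B"] \<eta> by simp
    moreover have "volU n ?S \<le> volU n B"
      unfolding ball by (rule volU_mono_ballU) (auto simp: ball contracted_set_def)
    ultimately show ?thesis
      by linarith
  qed
qed

theorem lemma5p1:
  fixes n :: nat
  assumes "n \<ge> 3"
  shows "\<exists>C::real. \<forall>(\<eta>::real) (B::(nat \<Rightarrow> real) set) (\<rho>::real) (t::real) (v::nat \<Rightarrow> real).
           \<eta> > 0 \<longrightarrow> (\<exists>c r. B = ballU n c r) \<longrightarrow> B \<subseteq> B1U n \<longrightarrow> volU n B \<ge> \<eta> \<longrightarrow>
           \<rho> > 0 \<longrightarrow> v \<in> orbit_e1 n \<longrightarrow>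
           volU n {s \<in> B. vnorm n (mv n (mm n (a_t n t) (u_s n s)) v)
                            \<le> exp t * \<eta>\<^sup>2 * \<rho>\<^sup>2 * vnorm n v}
             \<le> C * \<rho> * volU n B"
proof (intro exI[of _ "2 + 20 ^ (n - 2) / measure (lebU n) (B1U n)"] allI impI)
  fix \<eta> \<rho> t :: real and B and v
  assume "\<eta> > 0" "\<exists>c r. B = ballU n c r" "B \<subseteq> B1U n" "volU n B \<ge> \<eta>" "\<rho> > 0" "v \<in> orbit_e1 n"
  then have "volU n (contracted_set n B t ((\<eta> * \<rho>)\<^sup>2) v)
      \<le> (2 + 20 ^ (n - 2) / measure (lebU n) (B1U n)) * \<rho> * volU n B"
    using volU_contracted_set_le[OF assms] by blast
  then show "volU n {s \<in> B. vnorm n (mv n (mm n (a_t n t) (u_s n s)) v)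
                            \<le> exp t * \<eta>\<^sup>2 * \<rho>\<^sup>2 * vnorm n v}
             \<le> (2 + 20 ^ (n - 2) / measure (lebU n) (B1U n)) * \<rho> * volU n B"
    by (simp add: contracted_set_def power_mult_distrib mult.assoc)
qed

end
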